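(* Let $\gamma$ be an absolute constant such that for every positive integer $k$ and every $0<q<1$, $Y\sim\mathrm{Bin}(k,q)$ satisfies $\sup_{i\ge 0}\bigl|\sqrt{\operatorname{Var}(Y)}\,\mathbb{P}(Y=i)-\frac{1}{\sqrt{2\pi}}e^{-(i-\mathbb{E}Y)^2/(2\operatorname{Var}(Y))}\bigr|<\gamma/\sqrt{\operatorname{Var}(Y)}$. Let $0<\varepsilon\le1$, $c=\sqrt{2\pi}\,\varepsilon/20$, let $\beta$ be a sufficiently large absolute constant, $\lambda=\max\{c^{-2},\beta^2\}$, and $d=np\ge\lambda n^{1/2}$. Let $v\in V_n$, let $\sigma_0\in\{-1,+1\}^{V_n}$ be any configuration with $\sum_{u\in V_n}\sigma_0(u)=\varphi(2c\sqrt n)$, and let $\Gamma\subseteq V_n\setminus\{v\}$ satisfy $\bigl||\Gamma|-d\bigr|\le d^{2/3}$. Then $$\operatorname{Var}\bigl(X_2(v)\mid S_0=\sigma_0,\ N(v)=\Gamma\bigr)\le\bigl(\max\{96\gamma^2,8\}+1\bigr)d,$$ where $X_2(v)=\sum_{u\in N(v)}\mathbf 1(S_1(u)=+1)$.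
   Context: $G(n,p)$ is the binomial random graph on $V_n=\{1,\dots,n\}$ and $N(v)$ denotes the neighbourhood of $v$ in it. Majority dynamics: $S_{t+1}(u)=\operatorname{sgn}(\sum_{w\in N(u)}S_t(w))$ if the sum is nonzero, else $S_{t+1}(u)=S_t(u)$. Here $S_0=\sigma_0$ denotes that the initial states are the fixed configuration $\sigma_0$; the randomness is that of the graph. $\varphi(x)=\min\{k\in\mathbb Z:k\ge x,\ k\equiv n\pmod 2\}$. *)

theory Defs
  imports "HOL-Analysis.Analysis" "HOL-Probability.Probability"
begin

text \<open>Vertex set V_n = {1..n}; a graph is a set of edges, each a 2-element subset of V_n.\<close>

definition vert :: "nat \<Rightarrow> nat set" where
  "vert n = {1..n}"

definition all_pairs :: "nat \<Rightarrow> nat set set" where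
  "all_pairs n = {e. e \<subseteq> vert n \<and> card e = 2}"

definition Gnp :: "nat \<Rightarrow> real \<Rightarrow> nat set set pmf" where
  "Gnp n p = map_pmf (\<lambda>f. {e \<in> all_pairs n. f e})
                     (Pi_pmf (all_pairs n) False (\<lambda>_. bernoulli_pmf p))"

definition nbhd :: "nat set set \<Rightarrow> nat \<Rightarrow> nat set" where
  "nbhd E u = {w. {u, w} \<in> E}"

definition maj_step :: "nat set set \<Rightarrow> (nat \<Rightarrow> int) \<Rightarrow> nat \<Rightarrow> int" where
  "maj_step E S u = (let s = (\<Sum>w\<in>nbhd E u. S w) in
                      if s > 0 then 1 else if s < 0 then -1 else S u)"

definition X2 :: "nat set set \<Rightarrow> (nat \<Rightarrow> int) \<Rightarrow> nat \<Rightarrow> nat" where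
  "X2 E \<sigma>0 v = card {u \<in> nbhd E v. maj_step E \<sigma>0 u = 1}"

definition phi :: "nat \<Rightarrow> real \<Rightarrow> int" where
  "phi n x = (LEAST k::int. real_of_int k \<ge> x \<and> k mod 2 = int n mod 2)"

end

theory Submission
  imports Defs
begin

(* Conditioned on N(v) = Gamma, the edges at v are fixed and all other edges are still independent
   Bernoulli(p) coins, so X_2(v) is the sum over u in Gamma of the indicators I_u of S_1(u) = +1 and
   its variance is the sum of their covariances. The diagonal contributes at most |Gamma|. Two
   indicators I_u, I_w with u ~= w share only the coin of the edge {u,w}; conditioning on that coin
   gives Cov(I_u, I_w) = p(1-p) Delta_u Delta_w, where Delta_u is the change of P(I_u = 1) when the
   edge {u,w} is switched on. This moves the neighbour sum of u by sigma_0(w), so |Delta_u| is at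
   most the probability that the sum R of sigma_0 over the remaining neighbours of u hits one of two
   values. R is the difference of two independent counts, the positive one binomial with at least
   about n/2 trials because sum sigma_0 >= 0, so the local limit hypothesis gives
   |Delta_u| <= 2 (1/sqrt(2 pi) + gamma/sqrt V)/sqrt V with V ~ np(1-p)/2. With |Gamma| <= 1.1 d
   this yields Var <= |Gamma| + |Gamma|^2 p(1-p) max Delta^2 = O((1 + gamma^2) d); when n(1-p) is
   bounded the trivial bound |Delta_u| <= 1 suffices. *)

section \<open>Independence in finite products of distributions\<close>

definition depends_on :: "'a set \<Rightarrow> (('a \<Rightarrow> 'b) \<Rightarrow> 'c) \<Rightarrow> bool" where
  "depends_on S h \<longleftrightarrow> (\<forall>f g. (\<forall>x\<in>S. f x = g x) \<longrightarrow> h f = h g)"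

lemma depends_on_mono: "depends_on A h \<Longrightarrow> A \<subseteq> B \<Longrightarrow> depends_on B h"
  unfolding depends_on_def by blast

lemma depends_on_binop:
  "depends_on A h1 \<Longrightarrow> depends_on A h2 \<Longrightarrow> depends_on A (\<lambda>f. op (h1 f) (h2 f))"
  unfolding depends_on_def by metis

lemma depends_on_coordinate: "x \<in> A \<Longrightarrow> depends_on A (\<lambda>f. \<phi> (f x))"
  unfolding depends_on_def by auto

lemma finite_set_Pi_pmf:
  assumes "finite J"
  shows "finite (set_pmf (Pi_pmf J dflt (D :: 'a \<Rightarrow> 'b :: finite pmf)))"
  using assms by (intro finite_subset[OF set_Pi_pmf_subset' finite_PiE_dflt]) auto

lemma map_pmf_Pi_pmf_pair_indep:
  assumes J: "finite J" and S: "S \<subseteq> J" and ST: "S \<inter> T = {}"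
    and g: "depends_on S g" and h: "depends_on T h"
  shows "map_pmf (\<lambda>f. (g f, h f)) (Pi_pmf J dflt D)
       = pair_pmf (map_pmf g (Pi_pmf J dflt D)) (map_pmf h (Pi_pmf J dflt D))"
proof -
  define merge where "merge = (\<lambda>(f, f'::'a \<Rightarrow> 'b) x. if x \<in> S then f x else f' x)"
  define P where "P = pair_pmf (Pi_pmf S dflt D) (Pi_pmf (J - S) dflt D)"
  have "Pi_pmf J dflt D = Pi_pmf (S \<union> (J - S)) dflt D"
    using S by (simp add: Un_absorb1)
  also have "\<dots> = map_pmf merge P"
    unfolding merge_def P_def using J S by (intro Pi_pmf_union) (auto intro: finite_subset)
  finally have Pi: "Pi_pmf J dflt D = map_pmf merge P" .
  have g_merge: "g (merge x) = g (fst x)" for x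
  proof -
    have "\<forall>y\<in>S. merge x y = fst x y" by (cases x) (auto simp: merge_def)
    then show ?thesis using g unfolding depends_on_def by blast
  qed
  have h_merge: "h (merge x) = h (snd x)" for x
  proof -
    have "\<forall>y\<in>T. merge x y = snd x y" using ST by (cases x) (auto simp: merge_def)
    then show ?thesis using h unfolding depends_on_def by blast
  qed
  have "map_pmf (\<lambda>f. (g f, h f)) (Pi_pmf J dflt D) = map_pmf (\<lambda>(x, y). (g x, h y)) P"
    by (simp add: Pi pmf.map_comp o_def g_merge h_merge case_prod_unfold)
  also have "\<dots> = pair_pmf (map_pmf g (Pi_pmf S dflt D)) (map_pmf h (Pi_pmf (J - S) dflt D))"
    unfolding P_def by (rule map_pair)
  also have "map_pmf g (Pi_pmf S dflt D) = map_pmf g (Pi_pmf J dflt D)"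
  proof -
    have "map_pmf g (Pi_pmf J dflt D) = map_pmf g (map_pmf fst P)"
      by (simp add: Pi pmf.map_comp o_def g_merge)
    then show ?thesis
      by (simp add: P_def map_fst_pair_pmf)
  qed
  also have "map_pmf h (Pi_pmf (J - S) dflt D) = map_pmf h (Pi_pmf J dflt D)"
  proof -
    have "map_pmf h (Pi_pmf J dflt D) = map_pmf h (map_pmf snd P)"
      by (simp add: Pi pmf.map_comp o_def h_merge)
    then show ?thesis
      by (simp add: P_def map_snd_pair_pmf)
  qed
  finally show ?thesis .
qed

lemma expectation_pair_pmf_iterated:
  fixes h :: "'a \<Rightarrow> 'b \<Rightarrow> real"
  assumes A: "finite (set_pmf A)" and B: "finite (set_pmf B)"
  shows "measure_pmf.expectation (pair_pmf A B) (\<lambda>(x, y). h x y)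
       = measure_pmf.expectation A (\<lambda>x. measure_pmf.expectation B (\<lambda>y. h x y))"
proof -
  have "measure_pmf.expectation (pair_pmf A B) (\<lambda>(x, y). h x y)
      = (\<Sum>(x, y)\<in>set_pmf A \<times> set_pmf B. h x y * (pmf A x * pmf B y))"
    using A B by (subst integral_measure_pmf_real) (auto simp: pmf_pair intro!: sum.cong)
  also have "\<dots> = (\<Sum>x\<in>set_pmf A. (\<Sum>y\<in>set_pmf B. h x y * pmf B y) * pmf A x)"
    unfolding sum.cartesian_product[symmetric] by (simp add: sum_distrib_left sum_distrib_right mult_ac)
  also have "\<dots> = measure_pmf.expectation A (\<lambda>x. measure_pmf.expectation B (\<lambda>y. h x y))"
    using A B by (simp add: integral_measure_pmf_real)
  finally show ?thesis .
qed

lemma expectation_pair_pmf_mult: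
  fixes \<phi> :: "'a \<Rightarrow> real" and \<psi> :: "'b \<Rightarrow> real"
  assumes "finite (set_pmf A)" "finite (set_pmf B)"
  shows "measure_pmf.expectation (pair_pmf A B) (\<lambda>(x, y). \<phi> x * \<psi> y)
         = measure_pmf.expectation A \<phi> * measure_pmf.expectation B \<psi>"
  using assms by (simp add: expectation_pair_pmf_iterated)

lemma prob_pair_pmf_shift_le:
  fixes A B :: "nat pmf"
  assumes A: "finite (set_pmf A)" and B: "finite (set_pmf B)" and M: "\<And>j. pmf B j \<le> M"
  shows "measure_pmf.prob (pair_pmf A B) {(x, y). int y = int x + t} \<le> M"
proof -
  have ind: "indicator {(x, y). int y = int x + t} = (\<lambda>(x, y). indicator {y. int y = int x + t} y :: real)"
    by (auto simp: indicator_def)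
  have "measure_pmf.prob (pair_pmf A B) {(x, y). int y = int x + t}
      = measure_pmf.expectation (pair_pmf A B) (\<lambda>(x, y). indicator {y. int y = int x + t} y)"
    by (simp only: flip: ind) simp
  also have "\<dots> = measure_pmf.expectation A (\<lambda>x. measure_pmf.prob B {y. int y = int x + t})"
    using A B by (simp add: expectation_pair_pmf_iterated)
  also have "\<dots> \<le> measure_pmf.expectation A (\<lambda>x. M)"
  proof (intro integral_mono integrable_measure_pmf_finite A)
    fix x
    have "measure_pmf.prob B {y. int y = int x + t} \<le> measure_pmf.prob B {nat (int x + t)}"
      by (intro measure_pmf.finite_measure_mono) auto
    then show "measure_pmf.prob B {y. int y = int x + t} \<le> M"
      using M[of "nat (int x + t)"] by (simp add: measure_pmf_single)
  qed
  finally show ?thesis by simp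
qed

lemma expectation_Pi_pmf_mult_indep:
  fixes g h :: "('a \<Rightarrow> 'b :: finite) \<Rightarrow> real"
  assumes J: "finite J" and S: "S \<subseteq> J" and ST: "S \<inter> T = {}"
    and g: "depends_on S g" and h: "depends_on T h"
  shows "measure_pmf.expectation (Pi_pmf J dflt D) (\<lambda>f. g f * h f)
       = measure_pmf.expectation (Pi_pmf J dflt D) g * measure_pmf.expectation (Pi_pmf J dflt D) h"
proof -
  let ?P = "Pi_pmf J dflt D"
  have fin: "finite (set_pmf (map_pmf k ?P))" for k :: "_ \<Rightarrow> real"
    using finite_set_Pi_pmf[OF J, of dflt D] by simp
  have "measure_pmf.expectation ?P (\<lambda>f. g f * h f)
      = measure_pmf.expectation (map_pmf (\<lambda>f. (g f, h f)) ?P) (\<lambda>(x, y). x * y)"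
    by simp
  also have "\<dots> = measure_pmf.expectation (pair_pmf (map_pmf g ?P) (map_pmf h ?P)) (\<lambda>(x, y). x * y)"
    by (simp only: map_pmf_Pi_pmf_pair_indep[OF J S ST g h])
  also have "\<dots> = measure_pmf.expectation (map_pmf g ?P) (\<lambda>x. x) * measure_pmf.expectation (map_pmf h ?P) (\<lambda>y. y)"
    by (rule expectation_pair_pmf_mult[OF fin fin])
  finally show ?thesis by simp
qed

lemma cond_Pi_pmf_fix_coordinates:
  assumes J: "finite J" and K: "K \<subseteq> J"
    and ne: "set_pmf (Pi_pmf J dflt D) \<inter> {f. \<forall>e\<in>K. f e = t e} \<noteq> {}"
  shows "cond_pmf (Pi_pmf J dflt D) {f. \<forall>e\<in>K. f e = t e}
       = Pi_pmf J dflt (\<lambda>e. if e \<in> K then return_pmf (t e) else D e)"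
proof (rule pmf_eqI)
  fix f
  define X where "X = {f. \<forall>e\<in>K. f e = t e}"
  define B where "B = (\<lambda>e. if e \<in> K then {t e} else UNIV)"
  define D' where "D' = (\<lambda>e. if e \<in> K then return_pmf (t e) else D e)"
  let ?P = "Pi_pmf J dflt D" and ?default_outside = "\<lambda>f. \<forall>x. x \<notin> J \<longrightarrow> f x = dflt"
  have "measure ?P X = measure ?P (PiE_dflt J dflt B)"
    using K by (intro measure_prob_cong_0)
      (auto simp: X_def B_def PiE_dflt_def pmf_Pi[OF J] split: if_splits)
  also have "\<dots> = (\<Prod>e\<in>J. measure (D e) (B e))"
    using J by (rule measure_Pi_pmf_PiE_dflt)
  finally have mX: "measure ?P X = (\<Prod>e\<in>J. measure (D e) (B e))" .
  have mX0: "measure ?P X \<noteq> 0"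
    using ne unfolding X_def by (rule measure_measure_pmf_not_zero)
  have factor: "pmf (D e) (f e) = measure (D e) (B e) * pmf (D' e) (f e)"
    if "f \<in> X" "e \<in> J" for e
    using that by (auto simp: X_def B_def D'_def measure_pmf_single)
  have "pmf (Pi_pmf J dflt D') f = (if f \<in> X then pmf ?P f / measure ?P X else 0)"
  proof (cases "?default_outside f \<and> f \<in> X")
    case True
    then have "pmf ?P f = (\<Prod>e\<in>J. measure (D e) (B e) * pmf (D' e) (f e))"
      using factor by (auto simp: pmf_Pi[OF J] intro: prod.cong)
    also have "\<dots> = measure ?P X * pmf (Pi_pmf J dflt D') f"
      using True by (simp add: pmf_Pi[OF J] mX prod.distrib)
    finally show ?thesis using True mX0 by simp
  next
    case False
    moreover have "(\<Prod>e\<in>J. pmf (D' e) (f e)) = 0" if "f \<notin> X"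
      using that J K by (force simp: X_def D'_def indicator_def intro!: prod_zero)
    ultimately show ?thesis by (auto simp: pmf_Pi[OF J])
  qed
  then show "pmf (cond_pmf ?P {f. \<forall>e\<in>K. f e = t e}) f = pmf (Pi_pmf J dflt D') f"
    using ne by (simp add: pmf_cond X_def)
qed

section \<open>Covariances\<close>

definition pmf_covariance :: "'a pmf \<Rightarrow> ('a \<Rightarrow> real) \<Rightarrow> ('a \<Rightarrow> real) \<Rightarrow> real" where
  "pmf_covariance M X Y = measure_pmf.expectation M (\<lambda>x. X x * Y x)
     - measure_pmf.expectation M X * measure_pmf.expectation M Y"

lemma variance_cong_set_pmf:
  assumes "\<And>x. x \<in> set_pmf M \<Longrightarrow> X x = Y x"
  shows "measure_pmf.variance M X = measure_pmf.variance M Y"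
proof -
  have "measure_pmf.expectation M X = measure_pmf.expectation M Y"
    using assms by (intro integral_cong_AE) (auto intro!: AE_pmfI)
  then show ?thesis
    using assms by (intro integral_cong_AE) (auto intro!: AE_pmfI)
qed

lemma pmf_covariance_cong_set_pmf:
  assumes "\<And>x. x \<in> set_pmf M \<Longrightarrow> X x = X' x" "\<And>x. x \<in> set_pmf M \<Longrightarrow> Y x = Y' x"
  shows "pmf_covariance M X Y = pmf_covariance M X' Y'"
  unfolding pmf_covariance_def using assms
  by (intro arg_cong2[where f = "(-)"] arg_cong2[where f = "(*)"] integral_cong_AE)
    (auto intro!: AE_pmfI)

lemma variance_sum_finite_pmf:
  fixes h :: "'i \<Rightarrow> 'a \<Rightarrow> real"
  assumes M: "finite (set_pmf M)" and S: "finite S"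
  shows "measure_pmf.variance M (\<lambda>x. \<Sum>i\<in>S. h i x) = (\<Sum>i\<in>S. \<Sum>j\<in>S. pmf_covariance M (h i) (h j))"
proof -
  have int: "integrable M g" for g :: "'a \<Rightarrow> real"
    using M by (rule integrable_measure_pmf_finite)
  define c where "c i = measure_pmf.expectation M (h i)" for i
  have "measure_pmf.variance M (\<lambda>x. \<Sum>i\<in>S. h i x)
      = measure_pmf.expectation M (\<lambda>x. \<Sum>i\<in>S. \<Sum>j\<in>S. (h i x - c i) * (h j x - c j))"
    using int by (simp add: c_def power2_eq_square sum_subtractf[symmetric] sum_product
        Bochner_Integration.integral_sum)
  also have "\<dots> = (\<Sum>i\<in>S. \<Sum>j\<in>S. measure_pmf.expectation M (\<lambda>x. (h i x - c i) * (h j x - c j)))"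
    using int by (simp add: Bochner_Integration.integral_sum)
  also have "\<dots> = (\<Sum>i\<in>S. \<Sum>j\<in>S. pmf_covariance M (h i) (h j))"
    using int by (intro sum.cong refl)
      (simp add: pmf_covariance_def c_def algebra_simps Bochner_Integration.integral_diff)
  finally show ?thesis .
qed

lemma pmf_covariance_self_le:
  assumes "\<And>x. \<bar>X x\<bar> \<le> b" "finite (set_pmf M)"
  shows "pmf_covariance M X X \<le> b\<^sup>2"
proof -
  have "X x * X x \<le> b\<^sup>2" for x
    using mult_mono'[OF assms(1)[of x] assms(1)[of x]] by (simp add: power2_eq_square)
  then have "measure_pmf.expectation M (\<lambda>x. X x * X x) \<le> measure_pmf.expectation M (\<lambda>x. b\<^sup>2)"
    using assms(2) by (intro integral_mono integrable_measure_pmf_finite)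
  also have "\<dots> = b\<^sup>2"
    by simp
  finally show ?thesis
    unfolding pmf_covariance_def using zero_le_square[of "measure_pmf.expectation M X"] by linarith
qed

lemma pmf_covariance_shared_coordinate:
  fixes F G :: "bool \<Rightarrow> ('a \<Rightarrow> bool) \<Rightarrow> real" and dflt :: bool
  assumes J: "finite J" and eJ: "e \<in> J" and AJ: "A \<subseteq> J" and eAB: "e \<notin> A" "e \<notin> B"
    and AB: "A \<inter> B = {}" and De: "D e = bernoulli_pmf p" and p: "0 \<le> p" "p \<le> 1"
    and F: "\<And>b. depends_on A (F b)" and G: "\<And>b. depends_on B (G b)"
  defines "Q \<equiv> Pi_pmf J dflt D"
  shows "pmf_covariance Q (\<lambda>f. F (f e) f) (\<lambda>f. G (f e) f)
       = p * (1 - p) * (measure_pmf.expectation Q (F True) - measure_pmf.expectation Q (F False))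
                     * (measure_pmf.expectation Q (G True) - measure_pmf.expectation Q (G False))"
proof -
  define E where "E h = measure_pmf.expectation Q h" for h :: "('a \<Rightarrow> bool) \<Rightarrow> real"
  have int: "integrable Q h" for h :: "('a \<Rightarrow> bool) \<Rightarrow> real"
    unfolding Q_def using finite_set_Pi_pmf[OF J] by (rule integrable_measure_pmf_finite)
  have E_add: "E (\<lambda>f. h1 f + h2 f) = E h1 + E h2" for h1 h2
    unfolding E_def using int by (rule Bochner_Integration.integral_add) (rule int)
  have E_mult: "E (\<lambda>f. h1 f * h2 f) = E h1 * E h2"
    if "S \<subseteq> J" "S \<inter> T = {}" "depends_on S h1" "depends_on T h2" for S T h1 h2
    unfolding E_def Q_def using J that by (rule expectation_Pi_pmf_mult_indep)
  define x where "x f = (if f e then 1 else 0 :: real)" for f :: "'a \<Rightarrow> bool"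
  have "E x = measure_pmf.expectation (map_pmf (\<lambda>f. f e) Q) (\<lambda>b. if b then 1 else 0)"
    by (simp add: E_def x_def[abs_def])
  also have "map_pmf (\<lambda>f. f e) Q = bernoulli_pmf p"
    unfolding Q_def using J eJ De by (simp add: Pi_pmf_component)
  finally have Ex: "E x = p"
    using p by (simp add: integral_measure_pmf_real[where A = UNIV] UNIV_bool)
  define a \<delta> b \<eta> where "a = F False" and "\<delta> f = F True f - F False f"
    and "b = G False" and "\<eta> f = G True f - G False f" for f
  have dA: "depends_on A a" "depends_on A \<delta>"
    using F unfolding a_def \<delta>_def by (auto intro: depends_on_binop)
  have dB: "depends_on B b" "depends_on B \<eta>"
    using G unfolding b_def \<eta>_def by (auto intro: depends_on_binop)
  have dAB: "depends_on (A \<union> B) (\<lambda>f. a f * \<eta> f + \<delta> f * b f + \<delta> f * \<eta> f)"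
    using dA dB by (intro depends_on_binop[where op = "(+)"] depends_on_binop[where op = "(*)"])
      (auto intro: depends_on_mono)
  have dx: "depends_on {e} x"
    unfolding x_def by (rule depends_on_coordinate) simp
  have e_disj: "{e} \<inter> A = {}" "{e} \<inter> B = {}" "{e} \<inter> (A \<union> B) = {}"
    using eAB by auto
  have "(\<lambda>f. F (f e) f) = (\<lambda>f. a f + x f * \<delta> f)" "(\<lambda>f. G (f e) f) = (\<lambda>f. b f + x f * \<eta> f)"
    by (auto simp: a_def b_def \<delta>_def \<eta>_def x_def)
  then have "E (\<lambda>f. F (f e) f) = E a + p * E \<delta>" "E (\<lambda>f. G (f e) f) = E b + p * E \<eta>"
    using E_mult[OF _ e_disj(1) dx dA(2)] E_mult[OF _ e_disj(2) dx dB(2)] eJ Ex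
    by (simp_all add: E_add)
  moreover have "E (\<lambda>f. F (f e) f * G (f e) f)
      = E a * E b + p * (E a * E \<eta> + E \<delta> * E b + E \<delta> * E \<eta>)"
  proof -
    have "(\<lambda>f. F (f e) f * G (f e) f)
        = (\<lambda>f. a f * b f + x f * (a f * \<eta> f + \<delta> f * b f + \<delta> f * \<eta> f))"
      by (auto simp: a_def b_def \<delta>_def \<eta>_def x_def algebra_simps)
    then show ?thesis
      using E_mult[OF AJ AB dA(1) dB(1)] E_mult[OF _ e_disj(3) dx dAB] eJ Ex
        E_mult[OF AJ AB dA(1) dB(2)] E_mult[OF AJ AB dA(2) dB(1)] E_mult[OF AJ AB dA(2) dB(2)]
      by (simp add: E_add)
  qed
  moreover have "E (F True) - E (F False) = E \<delta>" "E (G True) - E (G False) = E \<eta>"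
    unfolding \<delta>_def \<eta>_def E_def using int by (simp_all add: Bochner_Integration.integral_diff)
  ultimately show ?thesis
    unfolding pmf_covariance_def E_def[symmetric] a_def b_def by (simp add: algebra_simps)
qed

section \<open>The binomial distribution\<close>

lemma expectation_binomial_pmf_Suc:
  fixes h :: "nat \<Rightarrow> real"
  assumes q: "0 \<le> q" "q \<le> 1"
  shows "measure_pmf.expectation (binomial_pmf (Suc n) q) h
       = (1 - q) * measure_pmf.expectation (binomial_pmf n q) h
         + q * measure_pmf.expectation (binomial_pmf n q) (\<lambda>k. h (Suc k))"
proof -
  have "binomial_pmf (Suc n) q
      = bernoulli_pmf q \<bind> (\<lambda>b. map_pmf (\<lambda>k. (if b then 1 else 0) + k) (binomial_pmf n q))"
    using q by (simp add: binomial_pmf_Suc map_pmf_def)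
  then have "measure_pmf.expectation (binomial_pmf (Suc n) q) h
      = (\<Sum>b\<in>UNIV. pmf (bernoulli_pmf q) b *\<^sub>R
           measure_pmf.expectation (map_pmf (\<lambda>k. (if b then 1 else 0) + k) (binomial_pmf n q)) h)"
    using q by (simp only:) (rule pmf_expectation_bind, auto intro!: finite_imageI finite_set_pmf_binomial_pmf)
  then show ?thesis
    using q by (simp add: UNIV_bool)
qed

lemma expectation_binomial_pmf_real:
  assumes q: "0 \<le> q" "q \<le> 1"
  shows "measure_pmf.expectation (binomial_pmf n q) real = real n * q"
proof (induction n)
  case 0
  then show ?case using q by (simp add: binomial_pmf_0)
next
  case (Suc n)
  then show ?case
    using q by (simp add: expectation_binomial_pmf_Suc Bochner_Integration.integral_add algebra_simps)
qed

lemma variance_binomial_pmf: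
  assumes q: "0 \<le> q" "q \<le> 1"
  shows "measure_pmf.variance (binomial_pmf n q) real = real n * q * (1 - q)"
proof -
  have second_moment:
    "measure_pmf.expectation (binomial_pmf m q) (\<lambda>k. (real k)\<^sup>2) = real m * q * (1 - q) + (real m * q)\<^sup>2"
    for m
  proof (induction m)
    case 0
    then show ?case using q by (simp add: binomial_pmf_0)
  next
    case (Suc m)
    have "measure_pmf.expectation (binomial_pmf m q) (\<lambda>k. (real (Suc k))\<^sup>2)
        = measure_pmf.expectation (binomial_pmf m q) (\<lambda>k. (real k)\<^sup>2)
          + 2 * measure_pmf.expectation (binomial_pmf m q) real + 1"
      using q by (simp add: power2_eq_square algebra_simps Bochner_Integration.integral_add)
    then show ?case
      using q Suc by (simp add: expectation_binomial_pmf_Suc expectation_binomial_pmf_real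
          power2_eq_square algebra_simps)
  qed
  let ?m = "real n * q"
  have "measure_pmf.variance (binomial_pmf n q) real
      = measure_pmf.expectation (binomial_pmf n q) (\<lambda>k. (real k)\<^sup>2 - 2 * ?m * real k + ?m\<^sup>2)"
    using q by (simp add: expectation_binomial_pmf_real power2_eq_square algebra_simps)
  also have "\<dots> = real n * q * (1 - q)"
    using q by (simp add: Bochner_Integration.integral_diff Bochner_Integration.integral_add
        second_moment expectation_binomial_pmf_real) (simp add: power2_eq_square algebra_simps)
  finally show ?thesis .
qed

definition binomial_local_limit_bound :: "real \<Rightarrow> bool" where
  "binomial_local_limit_bound \<gamma> \<longleftrightarrow> (\<forall>(k::nat) (q::real). k > 0 \<longrightarrow> 0 < q \<longrightarrow> q < 1 \<longrightarrow>
     (let Y = binomial_pmf k q;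
          V = measure_pmf.variance Y real;
          m = measure_pmf.expectation Y real
      in (SUP i::nat. \<bar>sqrt V * pmf Y i - 1 / sqrt (2 * pi) * exp (- (real i - m)\<^sup>2 / (2 * V))\<bar>)
           < \<gamma> / sqrt V))"

lemma binomial_local_limit_boundD:
  assumes \<gamma>: "binomial_local_limit_bound \<gamma>" and k: "k > 0" and q: "0 < q" "q < 1"
  defines "V \<equiv> real k * q * (1 - q)" and "m \<equiv> measure_pmf.expectation (binomial_pmf k q) real"
  shows "\<bar>sqrt V * pmf (binomial_pmf k q) j - 1 / sqrt (2 * pi) * exp (- (real j - m)\<^sup>2 / (2 * V))\<bar>
         < \<gamma> / sqrt V"
proof -
  define g where "g i = \<bar>sqrt V * pmf (binomial_pmf k q) i - 1 / sqrt (2 * pi) * exp (- (real i - m)\<^sup>2 / (2 * V))\<bar>"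
    for i :: nat
  have "(SUP i. g i) < \<gamma> / sqrt V"
    using \<gamma> k q unfolding binomial_local_limit_bound_def g_def V_def m_def
    by (auto simp: Let_def variance_binomial_pmf)
  moreover have "bdd_above (range g)"
  proof (rule bdd_aboveI2)
    fix i
    have "1 / sqrt (2 * pi) \<le> 1"
      using pi_gt3 by (simp add: divide_le_eq_1)
    moreover have "exp (- (real i - m)\<^sup>2 / (2 * V)) \<le> 1"
      using k q by (simp add: V_def)
    ultimately have "1 / sqrt (2 * pi) * exp (- (real i - m)\<^sup>2 / (2 * V)) \<le> 1"
      using exp_ge_zero by (blast intro: mult_le_one)
    moreover have "sqrt V * pmf (binomial_pmf k q) i \<le> sqrt V"
      using q pmf_le_1 by (intro mult_left_le) (simp_all add: V_def del: pmf_binomial)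
    moreover have "0 \<le> 1 / sqrt (2 * pi) * exp (- (real i - m)\<^sup>2 / (2 * V))"
      "0 \<le> sqrt V * pmf (binomial_pmf k q) i"
      using q by (simp_all add: V_def del: pmf_binomial)
    ultimately show "g i \<le> sqrt V + 1"
      unfolding g_def by linarith
  qed
  ultimately show ?thesis
    using cSUP_upper[of j UNIV g] unfolding g_def by simp
qed

lemma binomial_local_limit_bound_pos:
  assumes "binomial_local_limit_bound \<gamma>"
  shows "0 < \<gamma>"
proof -
  have "0 < \<gamma> / sqrt (real 1 * (1/2) * (1 - 1/2))"
    using binomial_local_limit_boundD[OF assms, of 1 "1/2" 0] by (rule le_less_trans[OF abs_ge_zero]) auto
  then show ?thesis by (simp add: zero_less_divide_iff)
qed

lemma pmf_binomial_le_local_limit: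
  assumes \<gamma>: "binomial_local_limit_bound \<gamma>" and q: "0 < q" "q < 1"
    and V0: "0 < V0" "V0 \<le> real k * q * (1 - q)"
  shows "pmf (binomial_pmf k q) j \<le> (1 / sqrt (2 * pi) + \<gamma> / sqrt V0) / sqrt V0"
proof -
  define V where "V = real k * q * (1 - q)"
  have k: "k > 0" using V0 q by (cases k) auto
  have s: "0 < sqrt V0" "sqrt V0 \<le> sqrt V"
    using V0 unfolding V_def by auto
  let ?e = "exp (- (real j - measure_pmf.expectation (binomial_pmf k q) real)\<^sup>2 / (2 * V))"
  have "?e \<le> 1"
    using k q by (simp add: V_def)
  then have "1 / sqrt (2 * pi) * ?e \<le> 1 / sqrt (2 * pi)"
    by (rule mult_left_le) simp
  then have "sqrt V * pmf (binomial_pmf k q) j < 1 / sqrt (2 * pi) + \<gamma> / sqrt V"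
    using binomial_local_limit_boundD[OF \<gamma> k q, of j] unfolding V_def[symmetric]
    by (simp add: abs_less_iff)
  then have "pmf (binomial_pmf k q) j \<le> (1 / sqrt (2 * pi) + \<gamma> / sqrt V) / sqrt V"
    using s by (simp add: field_simps)
  also have "\<dots> \<le> (1 / sqrt (2 * pi) + \<gamma> / sqrt V0) / sqrt V0"
    using binomial_local_limit_bound_pos[OF \<gamma>] s
    by (intro frac_le add_left_mono divide_left_mono) auto
  finally show ?thesis .
qed

section \<open>The random graph conditioned on a neighbourhood\<close>

definition graph :: "nat \<Rightarrow> (nat set \<Rightarrow> bool) \<Rightarrow> nat set set" where
  "graph n f = {e \<in> all_pairs n. f e}"

definition edges_given_nbhd :: "nat \<Rightarrow> real \<Rightarrow> nat \<Rightarrow> nat set \<Rightarrow> (nat set \<Rightarrow> bool) pmf" where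
  "edges_given_nbhd n p v \<Gamma> = Pi_pmf (all_pairs n) False
     (\<lambda>e. if v \<in> e then return_pmf (\<exists>u\<in>\<Gamma>. e = {v, u}) else bernoulli_pmf p)"

lemma finite_vert [simp]: "finite (vert n)"
  by (simp add: vert_def)

lemma finite_all_pairs: "finite (all_pairs n)"
  unfolding all_pairs_def by (rule finite_subset[of _ "Pow (vert n)"]) auto

lemma doubleton_in_all_pairs_iff: "{a, b} \<in> all_pairs n \<longleftrightarrow> a \<in> vert n \<and> b \<in> vert n \<and> a \<noteq> b"
  unfolding all_pairs_def by (cases "a = b") auto

lemma all_pairsE:
  assumes "e \<in> all_pairs n"
  obtains a b where "e = {a, b}" "a \<in> vert n" "b \<in> vert n" "a \<noteq> b"
  using assms unfolding all_pairs_def card_2_iff by auto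

lemma nbhd_graph: "u \<in> vert n \<Longrightarrow> nbhd (graph n f) u = {z \<in> vert n - {u}. f {u, z}}"
  unfolding nbhd_def graph_def by (auto simp: doubleton_in_all_pairs_iff)

lemma nbhd_graph_eq_iff:
  assumes v: "v \<in> vert n" and \<Gamma>: "\<Gamma> \<subseteq> vert n - {v}"
  shows "nbhd (graph n f) v = \<Gamma> \<longleftrightarrow> (\<forall>e\<in>{e \<in> all_pairs n. v \<in> e}. f e = (\<exists>u\<in>\<Gamma>. e = {v, u}))"
proof -
  have spoke: "(\<exists>u\<in>\<Gamma>. {v, z} = {v, u}) \<longleftrightarrow> z \<in> \<Gamma>" if "z \<noteq> v" for z
    using that \<Gamma> by (auto simp: doubleton_eq_iff)
  have "nbhd (graph n f) v = \<Gamma> \<longleftrightarrow> (\<forall>z\<in>vert n - {v}. f {v, z} = (z \<in> \<Gamma>))"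
    using v \<Gamma> by (auto simp: nbhd_graph)
  also have "\<dots> \<longleftrightarrow> (\<forall>e\<in>{e \<in> all_pairs n. v \<in> e}. f e = (\<exists>u\<in>\<Gamma>. e = {v, u}))"
  proof
    assume H: "\<forall>z\<in>vert n - {v}. f {v, z} = (z \<in> \<Gamma>)"
    show "\<forall>e\<in>{e \<in> all_pairs n. v \<in> e}. f e = (\<exists>u\<in>\<Gamma>. e = {v, u})"
    proof
      fix e assume "e \<in> {e \<in> all_pairs n. v \<in> e}"
      then obtain z where "e = {v, z}" "z \<in> vert n - {v}"
        by (elim CollectE conjE all_pairsE) (auto simp: insert_commute)
      then show "f e = (\<exists>u\<in>\<Gamma>. e = {v, u})"
        using H spoke by simp
    qed
  next
    assume "\<forall>e\<in>{e \<in> all_pairs n. v \<in> e}. f e = (\<exists>u\<in>\<Gamma>. e = {v, u})"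
    then show "\<forall>z\<in>vert n - {v}. f {v, z} = (z \<in> \<Gamma>)"
      using v by (auto simp: doubleton_in_all_pairs_iff spoke)
  qed
  finally show ?thesis .
qed

lemma cond_Gnp_nbhd:
  assumes v: "v \<in> vert n" and \<Gamma>: "\<Gamma> \<subseteq> vert n - {v}"
    and ne: "set_pmf (Gnp n p) \<inter> {E. nbhd E v = \<Gamma>} \<noteq> {}"
  shows "cond_pmf (Gnp n p) {E. nbhd E v = \<Gamma>} = map_pmf (graph n) (edges_given_nbhd n p v \<Gamma>)"
proof -
  let ?K = "{e \<in> all_pairs n. v \<in> e}" and ?P = "Pi_pmf (all_pairs n) False (\<lambda>_. bernoulli_pmf p)"
  have Gnp: "Gnp n p = map_pmf (graph n) ?P"
    unfolding Gnp_def graph_def[abs_def] ..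
  have X: "graph n -` {E. nbhd E v = \<Gamma>} = {f. \<forall>e\<in>?K. f e = (\<exists>u\<in>\<Gamma>. e = {v, u})}"
    by (auto simp: nbhd_graph_eq_iff[OF v \<Gamma>])
  have ne': "set_pmf ?P \<inter> graph n -` {E. nbhd E v = \<Gamma>} \<noteq> {}"
    using ne unfolding Gnp by auto
  have "cond_pmf (Gnp n p) {E. nbhd E v = \<Gamma>}
      = map_pmf (graph n) (cond_pmf ?P (graph n -` {E. nbhd E v = \<Gamma>}))"
    unfolding Gnp using ne' by (rule cond_map_pmf)
  also have "cond_pmf ?P (graph n -` {E. nbhd E v = \<Gamma>}) = edges_given_nbhd n p v \<Gamma>"
    using ne' unfolding edges_given_nbhd_def X
    by (subst cond_Pi_pmf_fix_coordinates) (simp_all add: finite_all_pairs cong: Pi_pmf_cong)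
  finally show ?thesis .
qed

lemma finite_set_edges_given_nbhd: "finite (set_pmf (edges_given_nbhd n p v \<Gamma>))"
  unfolding edges_given_nbhd_def by (intro finite_set_Pi_pmf finite_all_pairs)

lemma set_pmf_edges_given_nbhd:
  assumes "f \<in> set_pmf (edges_given_nbhd n p v \<Gamma>)" "e \<in> all_pairs n" "v \<in> e"
  shows "f e \<longleftrightarrow> (\<exists>u\<in>\<Gamma>. e = {v, u})"
proof -
  have "f e \<in> set_pmf (if v \<in> e then return_pmf (\<exists>u\<in>\<Gamma>. e = {v, u}) else bernoulli_pmf p)"
    using assms(1,2) set_Pi_pmf_subset'[OF finite_all_pairs]
    unfolding edges_given_nbhd_def PiE_dflt_def by fastforce
  then show ?thesis
    using assms(3) by simp
qed

lemma nbhd_edges_given_nbhd: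
  assumes v: "v \<in> vert n" and \<Gamma>: "\<Gamma> \<subseteq> vert n - {v}"
    and f: "f \<in> set_pmf (edges_given_nbhd n p v \<Gamma>)"
  shows "nbhd (graph n f) v = \<Gamma>"
  using set_pmf_edges_given_nbhd[OF f] by (simp add: nbhd_graph_eq_iff[OF v \<Gamma>])

lemma binomial_pmf_edges_given_nbhd:
  assumes u: "u \<in> vert n" "u \<noteq> v" and W: "W \<subseteq> vert n - {u, v}" and p: "0 \<le> p" "p \<le> 1"
  shows "map_pmf (\<lambda>f. card {z \<in> W. f {u, z}}) (edges_given_nbhd n p v \<Gamma>) = binomial_pmf (card W) p"
proof -
  define A where "A = (\<lambda>z. {u, z}) ` W"
  have inj: "inj_on (\<lambda>z. {u, z}) W"
    using W by (auto simp: inj_on_def doubleton_eq_iff)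
  have A: "finite A" "card A = card W" "A \<subseteq> all_pairs n"
    using W u inj finite_subset[OF W] by (auto simp: A_def card_image doubleton_in_all_pairs_iff)
  have count: "card {z \<in> W. f {u, z}} = card {e \<in> A. f e}" for f
  proof -
    have "{e \<in> A. f e} = (\<lambda>z. {u, z}) ` {z \<in> W. f {u, z}}"
      unfolding A_def by auto
    then show ?thesis
      using inj by (simp add: card_image inj_on_subset)
  qed
  have "binomial_pmf (card W) p = map_pmf (\<lambda>f. card {e \<in> A. f e}) (Pi_pmf A False (\<lambda>_. bernoulli_pmf p))"
    using A p by (intro binomial_pmf_altdef') auto
  also have "Pi_pmf A False (\<lambda>_. bernoulli_pmf p) = Pi_pmf A False
      (\<lambda>e. if v \<in> e then return_pmf (\<exists>u\<in>\<Gamma>. e = {v, u}) else bernoulli_pmf p)"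
    using W u by (intro Pi_pmf_cong) (auto simp: A_def)
  also have "\<dots> = map_pmf (\<lambda>f e. if e \<in> A then f e else False) (edges_given_nbhd n p v \<Gamma>)"
    unfolding edges_given_nbhd_def using finite_all_pairs A(3) by (rule Pi_pmf_subset)
  finally show ?thesis
    by (simp add: pmf.map_comp o_def count cong: conj_cong)
qed

section \<open>One step of majority dynamics\<close>

definition maj_plus :: "int \<Rightarrow> bool \<Rightarrow> real" where
  "maj_plus s b = (if 0 < s \<or> (s = 0 \<and> b) then 1 else 0)"

definition nbr_sum :: "(nat \<Rightarrow> int) \<Rightarrow> nat \<Rightarrow> nat set \<Rightarrow> (nat set \<Rightarrow> bool) \<Rightarrow> int" where
  "nbr_sum \<sigma> u W f = (\<Sum>z\<in>W. if f {u, z} then \<sigma> z else 0)"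

definition plus_after_step :: "nat \<Rightarrow> (nat \<Rightarrow> int) \<Rightarrow> nat \<Rightarrow> (nat set \<Rightarrow> bool) \<Rightarrow> real" where
  "plus_after_step n \<sigma> u f = (if maj_step (graph n f) \<sigma> u = 1 then 1 else 0)"

text \<open>The value of \<open>plus_after_step n \<sigma> u\<close> for a neighbour \<open>u\<close> of \<open>v\<close> when the edge \<open>{u, w}\<close> is
  present iff \<open>x\<close>.\<close>

definition plus_given_edge ::
    "nat \<Rightarrow> (nat \<Rightarrow> int) \<Rightarrow> nat \<Rightarrow> nat \<Rightarrow> nat \<Rightarrow> bool \<Rightarrow> (nat set \<Rightarrow> bool) \<Rightarrow> real" where
  "plus_given_edge n \<sigma> v u w x f =
     maj_plus (\<sigma> v + (if x then \<sigma> w else 0) + nbr_sum \<sigma> u (vert n - {u, v, w}) f) (\<sigma> u = 1)"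

lemma plus_after_step_eq_maj_plus:
  "plus_after_step n \<sigma> u f = maj_plus (\<Sum>z\<in>nbhd (graph n f) u. \<sigma> z) (\<sigma> u = 1)"
  unfolding plus_after_step_def maj_step_def maj_plus_def Let_def by auto

lemma maj_plus_jump:
  assumes "\<sigma> = 1 \<or> \<sigma> = -1"
  shows "\<bar>maj_plus (s + \<sigma>) b - maj_plus s b\<bar> \<le> indicator {0} s + indicator {-\<sigma>} s"
  using assms unfolding maj_plus_def by auto

lemma X2_edges_given_nbhd:
  assumes v: "v \<in> vert n" and \<Gamma>: "\<Gamma> \<subseteq> vert n - {v}"
    and f: "f \<in> set_pmf (edges_given_nbhd n p v \<Gamma>)"
  shows "real (X2 (graph n f) \<sigma> v) = (\<Sum>u\<in>\<Gamma>. plus_after_step n \<sigma> u f)"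
proof -
  have "finite \<Gamma>"
    by (rule finite_subset[OF \<Gamma>]) simp
  moreover have "{u \<in> \<Gamma>. maj_step (graph n f) \<sigma> u = 1} = \<Gamma> \<inter> {u. maj_step (graph n f) \<sigma> u = 1}"
    by auto
  ultimately show ?thesis
    unfolding X2_def nbhd_edges_given_nbhd[OF v \<Gamma> f]
    by (simp add: plus_after_step_def sum.If_cases)
qed

lemma plus_after_step_edges_given_nbhd:
  assumes v: "v \<in> vert n" and \<Gamma>: "\<Gamma> \<subseteq> vert n - {v}"
    and f: "f \<in> set_pmf (edges_given_nbhd n p v \<Gamma>)"
    and uw: "u \<in> \<Gamma>" "w \<in> \<Gamma>" "u \<noteq> w"
  shows "plus_after_step n \<sigma> u f = plus_given_edge n \<sigma> v u w (f {u, w}) f"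
proof -
  have u: "u \<in> vert n" "u \<noteq> v" and w: "w \<in> vert n" "w \<noteq> v"
    using uw \<Gamma> by auto
  have "f {u, v}"
    using set_pmf_edges_given_nbhd[OF f, of "{u, v}"] u v uw(1)
    by (auto simp: doubleton_in_all_pairs_iff insert_commute)
  moreover have "vert n - {u} = insert v (insert w (vert n - {u, v, w}))"
    using v u w uw by auto
  ultimately have "(\<Sum>z\<in>vert n - {u}. if f {u, z} then \<sigma> z else 0)
      = \<sigma> v + (if f {u, w} then \<sigma> w else 0) + nbr_sum \<sigma> u (vert n - {u, v, w}) f"
    unfolding nbr_sum_def using w uw(3) by (simp add: add.assoc)
  moreover have "(\<Sum>z\<in>nbhd (graph n f) u. \<sigma> z) = (\<Sum>z\<in>vert n - {u}. if f {u, z} then \<sigma> z else 0)"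
    unfolding nbhd_graph[OF u(1)] by (rule sum.inter_filter) simp
  ultimately show ?thesis
    by (simp add: plus_after_step_eq_maj_plus plus_given_edge_def)
qed

lemma depends_on_plus_given_edge:
  "depends_on ((\<lambda>z. {u, z}) ` (vert n - {u, v, w})) (plus_given_edge n \<sigma> v u w x)"
  unfolding depends_on_def plus_given_edge_def nbr_sum_def
  by (auto intro!: arg_cong2[where f = maj_plus] sum.cong)

lemma nbr_sum_eq_diff_card:
  assumes "finite W" and "\<forall>z\<in>W. \<sigma> z = 1 \<or> \<sigma> z = -1"
  shows "nbr_sum \<sigma> u W f
       = int (card {z \<in> {z \<in> W. \<sigma> z = 1}. f {u, z}}) - int (card {z \<in> {z \<in> W. \<sigma> z = -1}. f {u, z}})"
proof -
  let ?Wp = "{z \<in> W. \<sigma> z = 1}" and ?Wm = "{z \<in> W. \<sigma> z = -1}"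
  have split: "W = ?Wp \<union> ?Wm" "?Wp \<inter> ?Wm = {}"
    using assms(2) by auto
  have "nbr_sum \<sigma> u W f
      = (\<Sum>z\<in>?Wp. if f {u, z} then \<sigma> z else 0) + (\<Sum>z\<in>?Wm. if f {u, z} then \<sigma> z else 0)"
    unfolding nbr_sum_def using assms(1) by (subst split(1)) (simp add: sum.union_disjoint split(2))
  also have "\<dots> = (\<Sum>z\<in>?Wp. if f {u, z} then 1 else 0) + (\<Sum>z\<in>?Wm. if f {u, z} then -1 else 0)"
    by (intro arg_cong2[where f = "(+)"] sum.cong) auto
  finally show ?thesis
    using assms(1) by (simp add: sum.If_cases Int_def)
qed

lemma prob_nbr_sum_eq_le:
  assumes u: "u \<in> vert n" "u \<noteq> v" and W: "W \<subseteq> vert n - {u, v}"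
    and \<sigma>: "\<forall>z\<in>W. \<sigma> z = 1 \<or> \<sigma> z = -1" and p: "0 \<le> p" "p \<le> 1"
    and M: "\<And>j. pmf (binomial_pmf (card {z \<in> W. \<sigma> z = 1}) p) j \<le> M"
  shows "measure_pmf.prob (edges_given_nbhd n p v \<Gamma>) {f. nbr_sum \<sigma> u W f = t} \<le> M"
proof -
  let ?Q = "edges_given_nbhd n p v \<Gamma>"
  define Wp Wm where "Wp = {z \<in> W. \<sigma> z = 1}" and "Wm = {z \<in> W. \<sigma> z = -1}"
  define Bp Bm where "Bp f = card {z \<in> Wp. f {u, z}}" and "Bm f = card {z \<in> Wm. f {u, z}}"
    for f :: "nat set \<Rightarrow> bool"
  have indep: "map_pmf (\<lambda>f. (Bm f, Bp f)) ?Q = pair_pmf (map_pmf Bm ?Q) (map_pmf Bp ?Q)"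
    unfolding edges_given_nbhd_def
  proof (rule map_pmf_Pi_pmf_pair_indep[OF finite_all_pairs])
    show "(\<lambda>z. {u, z}) ` Wm \<subseteq> all_pairs n"
      using W u unfolding Wm_def by (auto simp: doubleton_in_all_pairs_iff)
    show "(\<lambda>z. {u, z}) ` Wm \<inter> (\<lambda>z. {u, z}) ` Wp = {}"
      using W u unfolding Wp_def Wm_def by (auto simp: doubleton_eq_iff)
    show "depends_on ((\<lambda>z. {u, z}) ` Wm) Bm" "depends_on ((\<lambda>z. {u, z}) ` Wp) Bp"
      unfolding depends_on_def Bm_def Bp_def by (auto intro!: arg_cong[where f = card])
  qed
  have Bp_law: "map_pmf Bp ?Q = binomial_pmf (card Wp) p"
    unfolding Bp_def[abs_def] using u W p by (intro binomial_pmf_edges_given_nbhd) (auto simp: Wp_def)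
  have "{f. nbr_sum \<sigma> u W f = t} = (\<lambda>f. (Bm f, Bp f)) -` {(x, y). int y = int x + t}"
    using nbr_sum_eq_diff_card[OF finite_subset[OF W] \<sigma>] by (auto simp: Bp_def Bm_def Wp_def Wm_def)
  then have "measure_pmf.prob ?Q {f. nbr_sum \<sigma> u W f = t}
      = measure_pmf.prob (map_pmf (\<lambda>f. (Bm f, Bp f)) ?Q) {(x, y). int y = int x + t}"
    by simp
  also have "\<dots> \<le> M"
    unfolding indep using M p finite_set_edges_given_nbhd
    by (intro prob_pair_pmf_shift_le) (auto simp: Bp_law Wp_def)
  finally show ?thesis .
qed

lemma expectation_maj_plus_jump_le:
  fixes R :: "'a \<Rightarrow> int"
  assumes M: "finite (set_pmf M)" and \<sigma>: "\<sigma> = 1 \<or> \<sigma> = -1"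
  shows "\<bar>measure_pmf.expectation M (\<lambda>x. maj_plus (s + \<sigma> + R x) b)
          - measure_pmf.expectation M (\<lambda>x. maj_plus (s + R x) b)\<bar>
         \<le> measure_pmf.prob M {x. R x = - s} + measure_pmf.prob M {x. R x = - s - \<sigma>}"
proof -
  have int: "integrable M h" for h :: "'a \<Rightarrow> real"
    using M by (rule integrable_measure_pmf_finite)
  have "\<bar>measure_pmf.expectation M (\<lambda>x. maj_plus (s + \<sigma> + R x) b)
          - measure_pmf.expectation M (\<lambda>x. maj_plus (s + R x) b)\<bar>
      = \<bar>measure_pmf.expectation M (\<lambda>x. maj_plus (s + R x + \<sigma>) b - maj_plus (s + R x) b)\<bar>"
    using int by (simp add: Bochner_Integration.integral_diff add_ac)
  also have "\<dots> \<le> measure_pmf.expectation M (\<lambda>x. \<bar>maj_plus (s + R x + \<sigma>) b - maj_plus (s + R x) b\<bar>)"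
    by (rule integral_abs_bound)
  also have "\<dots> \<le> measure_pmf.expectation M
      (\<lambda>x. indicator {x. R x = - s} x + indicator {x. R x = - s - \<sigma>} x)"
  proof (intro integral_mono int)
    fix x
    have "s + R x = 0 \<longleftrightarrow> R x = - s" "s + R x = - \<sigma> \<longleftrightarrow> R x = - s - \<sigma>"
      by auto
    then show "\<bar>maj_plus (s + R x + \<sigma>) b - maj_plus (s + R x) b\<bar>
        \<le> indicator {x. R x = - s} x + indicator {x. R x = - s - \<sigma>} x"
      using maj_plus_jump[OF \<sigma>, of "s + R x" b] by (simp only: indicator_def mem_Collect_eq singleton_iff)
  qed
  also have "\<dots> = measure_pmf.prob M {x. R x = - s} + measure_pmf.prob M {x. R x = - s - \<sigma>}"
    using int by (simp add: Bochner_Integration.integral_add)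
  finally show ?thesis .
qed

lemma expectation_maj_plus_diff_le_one:
  fixes R :: "'a \<Rightarrow> int"
  assumes M: "finite (set_pmf M)"
  shows "\<bar>measure_pmf.expectation M (\<lambda>x. maj_plus (s + R x) b)
          - measure_pmf.expectation M (\<lambda>x. maj_plus (t + R x) b)\<bar> \<le> 1"
proof -
  have "0 \<le> measure_pmf.expectation M (\<lambda>x. maj_plus (r + R x) b)"
    "measure_pmf.expectation M (\<lambda>x. maj_plus (r + R x) b) \<le> 1" for r
    using measure_pmf.prob_space_axioms M
    by (auto simp: maj_plus_def intro!: Bochner_Integration.integral_nonneg
        prob_space.integral_le_const integrable_measure_pmf_finite)
  from this[of s] this[of t] show ?thesis by linarith
qed

lemma plus_given_edge_difference_le:
  assumes uw: "u \<in> vert n - {v}" "w \<in> vert n - {v}"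
    and \<sigma>: "\<forall>z\<in>vert n. \<sigma> z \<in> {-1, 1}" and p: "0 \<le> p" "p \<le> 1"
    and M: "\<And>j. pmf (binomial_pmf (card {z \<in> vert n - {u, v, w}. \<sigma> z = 1}) p) j \<le> M"
  shows "\<bar>measure_pmf.expectation (edges_given_nbhd n p v \<Gamma>) (plus_given_edge n \<sigma> v u w True)
          - measure_pmf.expectation (edges_given_nbhd n p v \<Gamma>) (plus_given_edge n \<sigma> v u w False)\<bar>
         \<le> min 1 (2 * M)"
proof -
  let ?Q = "edges_given_nbhd n p v \<Gamma>" and ?R = "nbr_sum \<sigma> u (vert n - {u, v, w})"
  have prob: "measure_pmf.prob ?Q {f. ?R f = t} \<le> M" for t
    using uw \<sigma> p M by (intro prob_nbr_sum_eq_le) auto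
  have "\<bar>measure_pmf.expectation ?Q (\<lambda>f. maj_plus (\<sigma> v + \<sigma> w + ?R f) (\<sigma> u = 1))
          - measure_pmf.expectation ?Q (\<lambda>f. maj_plus (\<sigma> v + ?R f) (\<sigma> u = 1))\<bar>
      \<le> measure_pmf.prob ?Q {f. ?R f = - \<sigma> v} + measure_pmf.prob ?Q {f. ?R f = - \<sigma> v - \<sigma> w}"
    using \<sigma> uw by (intro expectation_maj_plus_jump_le finite_set_edges_given_nbhd) auto
  also have "\<dots> \<le> 2 * M"
    using prob[of "- \<sigma> v"] prob[of "- \<sigma> v - \<sigma> w"] by linarith
  finally show ?thesis
    using expectation_maj_plus_diff_le_one[OF finite_set_edges_given_nbhd,
        where s = "\<sigma> v + \<sigma> w" and t = "\<sigma> v" and R = ?R]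
    by (simp add: plus_given_edge_def[abs_def] min.bounded_iff)
qed

lemma pmf_covariance_plus_after_step_le:
  assumes v: "v \<in> vert n" and \<Gamma>: "\<Gamma> \<subseteq> vert n - {v}" and uw: "u \<in> \<Gamma>" "w \<in> \<Gamma>" "u \<noteq> w"
    and \<sigma>: "\<forall>z\<in>vert n. \<sigma> z \<in> {-1, 1}" and p: "0 \<le> p" "p \<le> 1"
    and M: "\<And>j. pmf (binomial_pmf (card {z \<in> vert n - {u, v, w}. \<sigma> z = 1}) p) j \<le> M"
  shows "pmf_covariance (edges_given_nbhd n p v \<Gamma>) (plus_after_step n \<sigma> u) (plus_after_step n \<sigma> w)
       \<le> p * (1 - p) * (min 1 (2 * M))\<^sup>2"
proof -
  let ?Q = "edges_given_nbhd n p v \<Gamma>" and ?W = "vert n - {u, v, w}"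
  let ?F = "plus_given_edge n \<sigma> v u w" and ?G = "plus_given_edge n \<sigma> v w u"
  define \<Delta>F \<Delta>G where "\<Delta>F = measure_pmf.expectation ?Q (?F True) - measure_pmf.expectation ?Q (?F False)"
    and "\<Delta>G = measure_pmf.expectation ?Q (?G True) - measure_pmf.expectation ?Q (?G False)"
  have W': "vert n - {w, v, u} = ?W"
    by auto
  have u: "u \<in> vert n" "u \<noteq> v" and w: "w \<in> vert n" "w \<noteq> v"
    using uw \<Gamma> by auto
  have "pmf_covariance ?Q (plus_after_step n \<sigma> u) (plus_after_step n \<sigma> w)
      = pmf_covariance ?Q (\<lambda>f. ?F (f {u, w}) f) (\<lambda>f. ?G (f {u, w}) f)"
    using plus_after_step_edges_given_nbhd[OF v \<Gamma> _ uw] plus_after_step_edges_given_nbhd[OF v \<Gamma> _ uw(2,1)]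
      uw(3)[symmetric]
    by (intro pmf_covariance_cong_set_pmf) (simp_all add: insert_commute)
  also have "\<dots> = p * (1 - p) * \<Delta>F * \<Delta>G"
    unfolding \<Delta>F_def \<Delta>G_def edges_given_nbhd_def
  proof (rule pmf_covariance_shared_coordinate[OF finite_all_pairs])
    show "{u, w} \<in> all_pairs n" "(\<lambda>z. {u, z}) ` ?W \<subseteq> all_pairs n"
      using u w uw(3) by (auto simp: doubleton_in_all_pairs_iff)
    show "{u, w} \<notin> (\<lambda>z. {u, z}) ` ?W" "{u, w} \<notin> (\<lambda>z. {w, z}) ` ?W"
      "(\<lambda>z. {u, z}) ` ?W \<inter> (\<lambda>z. {w, z}) ` ?W = {}"
      using uw(3) by (auto simp: doubleton_eq_iff)
    show "(if v \<in> {u, w} then return_pmf (\<exists>u'\<in>\<Gamma>. {u, w} = {v, u'}) else bernoulli_pmf p) = bernoulli_pmf p"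
      using u w by auto
    show "depends_on ((\<lambda>z. {u, z}) ` ?W) (?F x)" "depends_on ((\<lambda>z. {w, z}) ` ?W) (?G x)" for x
      using depends_on_plus_given_edge[of w n v u \<sigma> x] by (simp_all add: W' depends_on_plus_given_edge)
  qed fact+
  also have "\<dots> \<le> p * (1 - p) * (\<bar>\<Delta>F\<bar> * \<bar>\<Delta>G\<bar>)"
    using p by (simp add: mult.assoc abs_mult[symmetric] mult_left_mono)
  also have "\<dots> \<le> p * (1 - p) * (min 1 (2 * M))\<^sup>2"
  proof -
    have "\<bar>\<Delta>F\<bar> \<le> min 1 (2 * M)"
      unfolding \<Delta>F_def using u w \<sigma> p M by (intro plus_given_edge_difference_le) auto
    moreover have "\<bar>\<Delta>G\<bar> \<le> min 1 (2 * M)"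
      unfolding \<Delta>G_def using u w \<sigma> p M by (intro plus_given_edge_difference_le) (auto simp: W')
    ultimately have "\<bar>\<Delta>F\<bar> * \<bar>\<Delta>G\<bar> \<le> (min 1 (2 * M))\<^sup>2"
      unfolding power2_eq_square by (intro mult_mono) auto
    then show ?thesis
      using p by (intro mult_left_mono) auto
  qed
  finally show ?thesis .
qed

section \<open>The variance bound\<close>

lemma variance_X2_eq_sum_pmf_covariance:
  assumes v: "v \<in> vert n" and \<Gamma>: "\<Gamma> \<subseteq> vert n - {v}"
    and ne: "set_pmf (Gnp n p) \<inter> {E. nbhd E v = \<Gamma>} \<noteq> {}"
  shows "measure_pmf.variance (cond_pmf (Gnp n p) {E. nbhd E v = \<Gamma>}) (\<lambda>E. real (X2 E \<sigma> v))
       = (\<Sum>u\<in>\<Gamma>. \<Sum>w\<in>\<Gamma>. pmf_covariance (edges_given_nbhd n p v \<Gamma>)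
                               (plus_after_step n \<sigma> u) (plus_after_step n \<sigma> w))"
proof -
  let ?Q = "edges_given_nbhd n p v \<Gamma>"
  have "measure_pmf.variance (cond_pmf (Gnp n p) {E. nbhd E v = \<Gamma>}) (\<lambda>E. real (X2 E \<sigma> v))
      = measure_pmf.variance ?Q (\<lambda>f. real (X2 (graph n f) \<sigma> v))"
    by (simp add: cond_Gnp_nbhd[OF v \<Gamma> ne])
  also have "\<dots> = measure_pmf.variance ?Q (\<lambda>f. \<Sum>u\<in>\<Gamma>. plus_after_step n \<sigma> u f)"
    by (intro variance_cong_set_pmf X2_edges_given_nbhd[OF v \<Gamma>])
  also have "\<dots> = (\<Sum>u\<in>\<Gamma>. \<Sum>w\<in>\<Gamma>. pmf_covariance ?Q (plus_after_step n \<sigma> u) (plus_after_step n \<sigma> w))"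
    by (intro variance_sum_finite_pmf finite_set_edges_given_nbhd finite_subset[OF \<Gamma>]) simp
  finally show ?thesis .
qed

lemma variance_X2_le:
  assumes v: "v \<in> vert n" and \<Gamma>: "\<Gamma> \<subseteq> vert n - {v}"
    and ne: "set_pmf (Gnp n p) \<inter> {E. nbhd E v = \<Gamma>} \<noteq> {}"
    and \<sigma>: "\<forall>z\<in>vert n. \<sigma> z \<in> {-1, 1}" and p: "0 \<le> p" "p \<le> 1"
    and M: "\<And>u w j. pmf (binomial_pmf (card {z \<in> vert n - {u, v, w}. \<sigma> z = 1}) p) j \<le> M"
  shows "measure_pmf.variance (cond_pmf (Gnp n p) {E. nbhd E v = \<Gamma>}) (\<lambda>E. real (X2 E \<sigma> v))
       \<le> real (card \<Gamma>) + (real (card \<Gamma>))\<^sup>2 * (p * (1 - p) * (min 1 (2 * M))\<^sup>2)"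
proof -
  let ?Q = "edges_given_nbhd n p v \<Gamma>"
  have fin: "finite (set_pmf ?Q)" "finite \<Gamma>"
    by (auto intro: finite_set_edges_given_nbhd finite_subset[OF \<Gamma>])
  have "pmf_covariance ?Q (plus_after_step n \<sigma> u) (plus_after_step n \<sigma> w)
      \<le> (if u = w then 1 else 0) + p * (1 - p) * (min 1 (2 * M))\<^sup>2" if "u \<in> \<Gamma>" "w \<in> \<Gamma>" for u w
  proof (cases "u = w")
    case True
    have "pmf_covariance ?Q (plus_after_step n \<sigma> u) (plus_after_step n \<sigma> u) \<le> 1\<^sup>2"
      using fin by (intro pmf_covariance_self_le) (simp add: plus_after_step_def)
    moreover have "0 \<le> p * (1 - p) * (min 1 (2 * M))\<^sup>2"
      using p by simp
    ultimately show ?thesis using True by simp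
  next
    case False
    then show ?thesis
      using pmf_covariance_plus_after_step_le[OF v \<Gamma> that False \<sigma> p M] by simp
  qed
  then have "(\<Sum>u\<in>\<Gamma>. \<Sum>w\<in>\<Gamma>. pmf_covariance ?Q (plus_after_step n \<sigma> u) (plus_after_step n \<sigma> w))
      \<le> (\<Sum>u\<in>\<Gamma>. \<Sum>w\<in>\<Gamma>. (if u = w then 1 else 0) + p * (1 - p) * (min 1 (2 * M))\<^sup>2)"
    by (intro sum_mono) auto
  also have "\<dots> = real (card \<Gamma>) + (real (card \<Gamma>))\<^sup>2 * (p * (1 - p) * (min 1 (2 * M))\<^sup>2)"
    using fin by (simp add: sum.distrib power2_eq_square distrib_left mult.assoc)
  finally show ?thesis
    by (simp only: variance_X2_eq_sum_pmf_covariance[OF v \<Gamma> ne])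
qed

lemma variance_budget_nearly_complete:
  fixes n p g :: real
  assumes n: "0 < n" and p: "0 < p" "p \<le> 1" and co: "n * (1 - p) \<le> 6"
    and g: "0 \<le> g" "g \<le> 11/10 * (n * p)"
  shows "g + g\<^sup>2 * (p * (1 - p)) \<le> 9 * (n * p)"
proof -
  have "g\<^sup>2 * (p * (1 - p)) \<le> (11/10 * (n * p))\<^sup>2 * (p * (1 - p))"
    using g p by (intro mult_right_mono power_mono) auto
  also have "\<dots> = 121/100 * (n * p) * (p * p) * (n * (1 - p))"
    by (simp add: power2_eq_square algebra_simps)
  also have "\<dots> \<le> 121/100 * (n * p) * 1 * 6"
    using n p co by (intro mult_mono) (auto simp: mult_le_one)
  finally show ?thesis
    using g by linarith
qed

lemma local_limit_bound_sq_le: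
  fixes n p \<gamma> :: real
  assumes n: "0 < n" and p: "0 < p" "p < 1"
  defines "V \<equiv> 49/100 * n * p * (1 - p)"
  shows "p * (1 - p) * (2 * ((1 / sqrt (2 * pi) + \<gamma> / sqrt V) / sqrt V))\<^sup>2
       \<le> 8 * (1 / (2 * pi)) / (49/100 * n) + 8 * \<gamma>\<^sup>2 / (49/100 * n * V)"
proof -
  define a where "a = 1 / sqrt (2 * pi)"
  have V: "0 < V"
    unfolding V_def using n p by simp
  have "(2 * ((a + \<gamma> / sqrt V) / sqrt V))\<^sup>2 = 2\<^sup>2 * (a + \<gamma> / sqrt V)\<^sup>2 / (sqrt V)\<^sup>2"
    by (simp only: times_divide_eq_right power_divide power_mult_distrib)
  also have "\<dots> = 4 * (a + \<gamma> / sqrt V)\<^sup>2 / V"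
    using V by simp
  also have "\<dots> \<le> 4 * (2 * a\<^sup>2 + 2 * (\<gamma> / sqrt V)\<^sup>2) / V"
  proof -
    have "(x + y)\<^sup>2 \<le> 2 * x\<^sup>2 + 2 * y\<^sup>2" for x y :: real
      using zero_le_square[of "x - y"] by (simp add: power2_eq_square algebra_simps)
    from this[of a "\<gamma> / sqrt V"] show ?thesis
      using V by (intro divide_right_mono) auto
  qed
  also have "\<dots> = 8 * (a\<^sup>2 + \<gamma>\<^sup>2 / V) / V"
    using V by (simp add: power_divide algebra_simps)
  finally have "p * (1 - p) * (2 * ((a + \<gamma> / sqrt V) / sqrt V))\<^sup>2
      \<le> p * (1 - p) * (8 * (a\<^sup>2 + \<gamma>\<^sup>2 / V) / V)"
    using p by (intro mult_left_mono) auto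
  also have "\<dots> = 8 * a\<^sup>2 / (49/100 * n) + 8 * \<gamma>\<^sup>2 / (49/100 * n * V)"
  proof -
    have pV: "p * (1 - p) = V * 100 / (49 * n)"
      unfolding V_def using n by (simp add: field_simps)
    show ?thesis
      unfolding pV using n V by (simp add: field_simps)
  qed
  also have "a\<^sup>2 = 1 / (2 * pi)"
    unfolding a_def by (simp add: power_divide)
  finally show ?thesis
    unfolding a_def .
qed

lemma variance_budget_local_limit:
  fixes n p g \<gamma> :: real
  assumes n: "0 < n" and p: "0 < p" "p < 1" and co: "6 \<le> n * (1 - p)"
    and g: "0 \<le> g" "g \<le> 11/10 * (n * p)"
  defines "V \<equiv> 49/100 * n * p * (1 - p)"
  defines "M \<equiv> (1 / sqrt (2 * pi) + \<gamma> / sqrt V) / sqrt V"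
  shows "g + g\<^sup>2 * (p * (1 - p) * (2 * M)\<^sup>2) \<le> (44/10 + 7 * \<gamma>\<^sup>2) * (n * p)"
proof -
  have pi: "1 / (2 * pi) \<le> 1/6"
    using pi_gt3 by (simp add: divide_le_eq)
  have g2: "g\<^sup>2 \<le> 121/100 * (n * p)\<^sup>2"
    using power_mono[OF g(2) g(1), of 2] by (simp add: power2_eq_square)
  have "121/100 * (n * p)\<^sup>2 * (8 * (1 / (2 * pi)) / (49/100 * n))
      = (121/100 * 8 / (49/100)) * (1 / (2 * pi)) * p * (n * p)"
    using n by (simp add: power2_eq_square field_simps)
  also have "\<dots> \<le> (121/100 * 8 / (49/100)) * (1/6) * 1 * (n * p)"
    using pi p n by (intro mult_right_mono mult_mono) auto
  also have "\<dots> \<le> 33/10 * (n * p)"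
    using n p by (intro mult_right_mono) auto
  finally have t1: "121/100 * (n * p)\<^sup>2 * (8 * (1 / (2 * pi)) / (49/100 * n)) \<le> 33/10 * (n * p)" .
  have "121/100 * (n * p)\<^sup>2 * (8 * \<gamma>\<^sup>2 / (49/100 * n * V))
      = (121/100 * 8 / (49/100 * (49/100))) * \<gamma>\<^sup>2 * (n * p) / (n * (1 - p))"
    unfolding V_def using n p by (simp add: power2_eq_square field_simps)
  also have "\<dots> \<le> (121/100 * 8 / (49/100 * (49/100))) * \<gamma>\<^sup>2 * (n * p) / 6"
    using co n p by (intro divide_left_mono) auto
  also have "\<dots> \<le> 7 * \<gamma>\<^sup>2 * (n * p)"
    using n p by simp
  finally have t2: "121/100 * (n * p)\<^sup>2 * (8 * \<gamma>\<^sup>2 / (49/100 * n * V)) \<le> 7 * \<gamma>\<^sup>2 * (n * p)" .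
  have "g\<^sup>2 * (p * (1 - p) * (2 * M)\<^sup>2)
      \<le> 121/100 * (n * p)\<^sup>2 * (8 * (1 / (2 * pi)) / (49/100 * n) + 8 * \<gamma>\<^sup>2 / (49/100 * n * V))"
    using g2 local_limit_bound_sq_le[OF n p, of \<gamma>] p unfolding M_def V_def by (intro mult_mono) auto
  then show ?thesis
    using t1 t2 g by (simp add: distrib_left algebra_simps)
qed

lemma sum_spins_eq:
  assumes "finite S" and "\<forall>u\<in>S. \<sigma> u \<in> {-1, 1 :: int}"
  shows "(\<Sum>u\<in>S. \<sigma> u) = 2 * int (card {u \<in> S. \<sigma> u = 1}) - int (card S)"
proof -
  have split: "S = {u \<in> S. \<sigma> u = 1} \<union> {u \<in> S. \<sigma> u = -1}" "{u \<in> S. \<sigma> u = 1} \<inter> {u \<in> S. \<sigma> u = -1} = {}"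
    using assms(2) by auto
  have "(\<Sum>u\<in>S. \<sigma> u) = int (card {u \<in> S. \<sigma> u = 1}) - int (card {u \<in> S. \<sigma> u = -1})"
    using assms(1) by (subst split(1)) (simp add: sum.union_disjoint split(2))
  moreover have "card S = card {u \<in> S. \<sigma> u = 1} + card {u \<in> S. \<sigma> u = -1}"
    using assms(1) by (subst split(1)) (simp add: card_Un_disjoint split(2))
  ultimately show ?thesis by simp
qed

lemma card_plus_spins_ge:
  fixes \<sigma> :: "nat \<Rightarrow> int"
  assumes \<sigma>: "\<forall>z\<in>vert n. \<sigma> z \<in> {-1, 1}" and sum: "0 \<le> (\<Sum>z\<in>vert n. \<sigma> z)" and n: "300 \<le> n"
  shows "49/100 * real n \<le> real (card {z \<in> vert n - {u, v, w}. \<sigma> z = 1})"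
proof -
  have "real n \<le> 2 * real (card {z \<in> vert n. \<sigma> z = 1})"
    using sum sum_spins_eq[OF finite_vert \<sigma>] by (simp add: vert_def)
  moreover have "card {z \<in> vert n. \<sigma> z = 1} \<le> card {z \<in> vert n - {u, v, w}. \<sigma> z = 1} + card {u, v, w}"
    by (rule order_trans[OF card_mono card_Un_le]) auto
  moreover have "card {u, v, w} \<le> 3"
    by (simp add: card_insert_if)
  ultimately show ?thesis
    using n by linarith
qed

lemma variance_X2_le_linear:
  assumes \<gamma>: "binomial_local_limit_bound \<gamma>"
    and v: "v \<in> vert n" and \<Gamma>: "\<Gamma> \<subseteq> vert n - {v}"
    and ne: "set_pmf (Gnp n p) \<inter> {E. nbhd E v = \<Gamma>} \<noteq> {}"
    and \<sigma>: "\<forall>z\<in>vert n. \<sigma> z \<in> {-1, 1}" and sum: "0 \<le> (\<Sum>z\<in>vert n. \<sigma> z)"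
    and n: "300 \<le> n" and p: "0 < p" "p \<le> 1" and g: "real (card \<Gamma>) \<le> 11/10 * (real n * p)"
  shows "measure_pmf.variance (cond_pmf (Gnp n p) {E. nbhd E v = \<Gamma>}) (\<lambda>E. real (X2 E \<sigma> v))
       \<le> (max (96 * \<gamma>\<^sup>2) 8 + 1) * (real n * p)"
proof (cases "real n * (1 - p) \<le> 6")
  case True
  have "measure_pmf.variance (cond_pmf (Gnp n p) {E. nbhd E v = \<Gamma>}) (\<lambda>E. real (X2 E \<sigma> v))
      \<le> real (card \<Gamma>) + (real (card \<Gamma>))\<^sup>2 * (p * (1 - p) * (min 1 (2 * 1))\<^sup>2)"
    using p by (intro variance_X2_le[OF v \<Gamma> ne \<sigma>] pmf_le_1) auto
  also have "\<dots> \<le> 9 * (real n * p)"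
    using variance_budget_nearly_complete[of "real n" p "real (card \<Gamma>)"] n p True g by simp
  also have "\<dots> \<le> (max (96 * \<gamma>\<^sup>2) 8 + 1) * (real n * p)"
    using p by (intro mult_right_mono) auto
  finally show ?thesis .
next
  case False
  define V where "V = 49/100 * real n * p * (1 - p)"
  define M where "M = (1 / sqrt (2 * pi) + \<gamma> / sqrt V) / sqrt V"
  have p1: "p < 1"
    using False p by (cases "p = 1") auto
  have V: "0 < V"
    unfolding V_def using n p p1 by simp
  have "V \<le> real (card {z \<in> vert n - {u, v, w}. \<sigma> z = 1}) * p * (1 - p)" for u w
    unfolding V_def using p p1 card_plus_spins_ge[OF \<sigma> sum n, of u v w]
    by (intro mult_right_mono) auto
  then have "pmf (binomial_pmf (card {z \<in> vert n - {u, v, w}. \<sigma> z = 1}) p) j \<le> M" for u w j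
    unfolding M_def using p p1 V by (intro pmf_binomial_le_local_limit[OF \<gamma>]) auto
  then have "measure_pmf.variance (cond_pmf (Gnp n p) {E. nbhd E v = \<Gamma>}) (\<lambda>E. real (X2 E \<sigma> v))
      \<le> real (card \<Gamma>) + (real (card \<Gamma>))\<^sup>2 * (p * (1 - p) * (min 1 (2 * M))\<^sup>2)"
    using p by (intro variance_X2_le[OF v \<Gamma> ne \<sigma>]) auto
  also have "\<dots> \<le> real (card \<Gamma>) + (real (card \<Gamma>))\<^sup>2 * (p * (1 - p) * (2 * M)\<^sup>2)"
    using p p1 V binomial_local_limit_bound_pos[OF \<gamma>] unfolding M_def
    by (intro add_left_mono mult_left_mono power_mono) auto
  also have "\<dots> \<le> (44/10 + 7 * \<gamma>\<^sup>2) * (real n * p)"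
    unfolding M_def V_def using n p p1 False g by (intro variance_budget_local_limit) auto
  also have "\<dots> \<le> (max (96 * \<gamma>\<^sup>2) 8 + 1) * (real n * p)"
    using p by (intro mult_right_mono) auto
  finally show ?thesis .
qed

lemma phi_ge: "x \<le> real_of_int (phi n x)"
proof -
  define k where "k = (if \<lceil>x\<rceil> mod 2 = int n mod 2 then \<lceil>x\<rceil> else \<lceil>x\<rceil> + 1)"
  have "x \<le> real_of_int k"
    unfolding k_def by (auto intro: order_trans[OF le_of_int_ceiling])
  moreover have "k mod 2 = int n mod 2"
    unfolding k_def by presburger
  ultimately have k: "x \<le> real_of_int k \<and> k mod 2 = int n mod 2" ..
  have "phi n x = k"
    unfolding phi_def
  proof (rule Least_equality)
    fix l assume l: "x \<le> real_of_int l \<and> l mod 2 = int n mod 2"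
    then have "\<lceil>x\<rceil> \<le> l"
      by (simp add: ceiling_le_iff)
    moreover have "l mod 2 = int n mod 2"
      using l ..
    ultimately show "k \<le> l"
      unfolding k_def by presburger
  qed (rule k)
  then show ?thesis
    using k by simp
qed

lemma powr_two_thirds_le:
  fixes d :: real
  assumes "1000 \<le> d"
  shows "d powr (2/3) \<le> d / 10"
proof -
  have "(1000::real) powr (1/3) = (10 powr 3) powr (1/3)"
    by (simp add: powr_realpow)
  also have "\<dots> = 10"
    by (simp add: powr_powr)
  moreover have "(1000::real) powr (1/3) \<le> d powr (1/3)"
    using assms by (intro powr_mono2) auto
  ultimately have "d powr (2/3) * 10 \<le> d powr (2/3) * d powr (1/3)"
    by (intro mult_left_mono) auto
  also have "\<dots> = d"
    using assms by (simp add: powr_add[symmetric])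
  finally show ?thesis
    by simp
qed

lemma degree_regime:
  fixes \<beta> c p :: real
  assumes \<beta>: "10 \<le> \<beta>" and d: "max (1 / c\<^sup>2) (\<beta>\<^sup>2) * sqrt (real n) \<le> real n * p"
    and p: "0 \<le> p" "p \<le> 1" and n: "0 < n"
    and dev: "\<bar>real (card \<Gamma>) - real n * p\<bar> \<le> (real n * p) powr (2/3)"
  shows "300 \<le> n" "0 < p" "real (card \<Gamma>) \<le> 11/10 * (real n * p)"
proof -
  have "100 \<le> max (1 / c\<^sup>2) (\<beta>\<^sup>2)"
    using power_mono[OF \<beta>, of 2] by simp
  then have "100 * sqrt (real n) \<le> max (1 / c\<^sup>2) (\<beta>\<^sup>2) * sqrt (real n)"
    by (intro mult_right_mono) auto
  with d have d100: "100 * sqrt (real n) \<le> real n * p"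
    by linarith
  moreover have "real n * p \<le> real n"
    using p by (simp add: mult_left_le)
  ultimately have "100 * sqrt (real n) \<le> sqrt (real n) * sqrt (real n)"
    by simp
  then have "100 \<le> sqrt (real n)"
    using n by (simp only: mult_le_cancel_right_pos real_sqrt_gt_0_iff of_nat_0_less_iff)
  then have large: "10000 \<le> real n" "10000 \<le> real n * p"
    using d100 real_sqrt_le_iff[of 10000 "real n"] by simp_all
  then show "300 \<le> n" "0 < p"
    using p(1) by (simp, cases "p = 0") auto
  show "real (card \<Gamma>) \<le> 11/10 * (real n * p)"
    using dev powr_two_thirds_le[of "real n * p"] large by linarith
qed

theorem lemma3p6:
  fixes \<gamma> :: real
  assumes gamma: "\<And>(k::nat) (q::real). k > 0 \<Longrightarrow> 0 < q \<Longrightarrow> q < 1 \<Longrightarrow>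
     (let Y = binomial_pmf k q;
          V = measure_pmf.variance Y real;
          m = measure_pmf.expectation Y real
      in (SUP i::nat. \<bar>sqrt V * pmf Y i - 1 / sqrt (2 * pi) * exp (- (real i - m)\<^sup>2 / (2 * V))\<bar>)
           < \<gamma> / sqrt V)"
  shows "\<exists>\<beta>0::real. \<forall>\<beta>\<ge>\<beta>0. \<forall>(\<epsilon>::real) (n::nat) (p::real) (v::nat) (\<sigma>0::nat \<Rightarrow> int) (\<Gamma>::nat set).
     let c = sqrt (2 * pi) * \<epsilon> / 20;
         lam = max (1 / c\<^sup>2) (\<beta>\<^sup>2);
         d = real n * p
     in 0 < \<epsilon> \<longrightarrow> \<epsilon> \<le> 1 \<longrightarrow> 0 \<le> p \<longrightarrow> p \<le> 1 \<longrightarrow>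
        d \<ge> lam * sqrt (real n) \<longrightarrow>
        v \<in> vert n \<longrightarrow>
        (\<forall>u\<in>vert n. \<sigma>0 u \<in> {-1, 1}) \<longrightarrow>
        (\<Sum>u\<in>vert n. \<sigma>0 u) = phi n (2 * c * sqrt (real n)) \<longrightarrow>
        \<Gamma> \<subseteq> vert n - {v} \<longrightarrow>
        \<bar>real (card \<Gamma>) - d\<bar> \<le> d powr (2/3) \<longrightarrow>
        set_pmf (Gnp n p) \<inter> {E. nbhd E v = \<Gamma>} \<noteq> {} \<longrightarrow>
        measure_pmf.variance (cond_pmf (Gnp n p) {E. nbhd E v = \<Gamma>}) (\<lambda>E. real (X2 E \<sigma>0 v))
          \<le> (max (96 * \<gamma>\<^sup>2) 8 + 1) * d"
proof -
  have \<gamma>: "binomial_local_limit_bound \<gamma>"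
    unfolding binomial_local_limit_bound_def using gamma by blast
  show ?thesis
  proof (intro exI[of _ "10::real"] allI impI, unfold Let_def, intro impI)
    fix \<beta> \<epsilon> p :: real and n v :: nat and \<sigma>0 :: "nat \<Rightarrow> int" and \<Gamma> :: "nat set"
    let ?c = "sqrt (2 * pi) * \<epsilon> / 20"
    assume \<beta>: "10 \<le> \<beta>" and \<epsilon>: "0 < \<epsilon>" "\<epsilon> \<le> 1" and p: "0 \<le> p" "p \<le> 1"
      and d: "max (1 / ?c\<^sup>2) (\<beta>\<^sup>2) * sqrt (real n) \<le> real n * p"
      and v: "v \<in> vert n" and \<sigma>: "\<forall>u\<in>vert n. \<sigma>0 u \<in> {-1, 1}"
      and sum: "(\<Sum>u\<in>vert n. \<sigma>0 u) = phi n (2 * ?c * sqrt (real n))"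
      and \<Gamma>: "\<Gamma> \<subseteq> vert n - {v}" and dev: "\<bar>real (card \<Gamma>) - real n * p\<bar> \<le> (real n * p) powr (2/3)"
      and ne: "set_pmf (Gnp n p) \<inter> {E. nbhd E v = \<Gamma>} \<noteq> {}"
    have "0 \<le> (\<Sum>u\<in>vert n. \<sigma>0 u)"
    proof -
      have "0 \<le> 2 * ?c * sqrt (real n)"
        using \<epsilon> by simp
      then show ?thesis
        using sum phi_ge[of "2 * ?c * sqrt (real n)" n] by linarith
    qed
    moreover have "0 < n"
      using v by (simp add: vert_def)
    ultimately show "measure_pmf.variance (cond_pmf (Gnp n p) {E. nbhd E v = \<Gamma>}) (\<lambda>E. real (X2 E \<sigma>0 v))
        \<le> (max (96 * \<gamma>\<^sup>2) 8 + 1) * (real n * p)"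
      using degree_regime[OF \<beta> d p _ dev] p by (intro variance_X2_le_linear[OF \<gamma> v \<Gamma> ne \<sigma>]) auto
  qed
qed

end
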